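(* Let $n\ge1$, let $f:\{0,1\}^n\to\{0,1\}^n$, let $\check{M}$ be the adjacency matrix of its asynchronous iteration graph $\Gamma(f)$ (with respect to an enumeration of $\{0,1\}^n$), and let $M$ be the $2^n\times 2^n$ matrix with $M_{ij}=\frac{1}{n}\check{M}_{ij}$ for $i\neq j$ and $M_{ii}=1-\frac{1}{n}\sum_{j\neq i}\check{M}_{ij}$. If $\Gamma(f)$ is strongly connected, then the law of the output of the generator described below tends to the uniform distribution on $\{0,1\}^n$ if and only if $M$ is doubly stochastic (all its rows and all its columns sum to $1$).
   Context: With $F_f(i,x)=(x_1,\dots,x_{i-1},f_i(x),x_{i+1},\dots,x_n)$, $\Gamma(f)$ is the directed graph on $\{0,1\}^n$ with an arc from $x$ to $F_f(i,x)$ for every $x$ and $i\in\{1,\dots,n\}$; $\check{M}_{ij}=1$ if there is an arc from the $i$-th to the $j$-th configuration and $0$ otherwise. The generator (with parameters $f$, an integer $b$ and an initial configuration $x^0\in\{0,1\}^n$) does: set $x\leftarrow x^0$; draw $k\leftarrow b+r$ with $r$ uniformly distributed in $\{1,\dots,b+1\}$; then $k$ times, draw $s$ uniformly in $\{1,\dots,n\}$ and set $x\leftarrow F_f(s,x)$; output $x$. All random draws are provided by a uniform pseudo-random generator (XORshift), modeled as independent uniform draws, so that each step of the iteration is a Markov chain transition with matrix $M$. "Tends to the uniform distribution" refers to the law of the output as the number of iterations grows (i.e. as $b\to\infty$). *)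

theory Defs
  imports "HOL-Probability.Probability"
begin

text \<open>Configurations of {0,1}^n are boolean lists of length n (True = 1).
  Coordinates are indexed 1..n as in the paper.\<close>

definition configs :: "nat \<Rightarrow> bool list set" where
  "configs n = {x. length x = n}"

definition Ff :: "(bool list \<Rightarrow> bool list) \<Rightarrow> nat \<Rightarrow> bool list \<Rightarrow> bool list" where
  "Ff f i x = x[i - 1 := f x ! (i - 1)]"

definition arc :: "nat \<Rightarrow> (bool list \<Rightarrow> bool list) \<Rightarrow> bool list \<Rightarrow> bool list \<Rightarrow> bool" where
  "arc n f x y \<longleftrightarrow> x \<in> configs n \<and> (\<exists>i\<in>{1..n}. y = Ff f i x)"

definition strongly_connected_Gamma :: "nat \<Rightarrow> (bool list \<Rightarrow> bool list) \<Rightarrow> bool" where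
  "strongly_connected_Gamma n f \<longleftrightarrow>
     (\<forall>x\<in>configs n. \<forall>y\<in>configs n. (x, y) \<in> {(u, v). arc n f u v}\<^sup>*)"

text \<open>Adjacency matrix check-M of Gamma(f), indexed directly by configurations.\<close>
definition Mcheck :: "nat \<Rightarrow> (bool list \<Rightarrow> bool list) \<Rightarrow> bool list \<Rightarrow> bool list \<Rightarrow> real" where
  "Mcheck n f x y = (if arc n f x y then 1 else 0)"

definition Mmat :: "nat \<Rightarrow> (bool list \<Rightarrow> bool list) \<Rightarrow> bool list \<Rightarrow> bool list \<Rightarrow> real" where
  "Mmat n f x y =
     (if x = y then 1 - (1 / real n) * (\<Sum>z\<in>configs n - {x}. Mcheck n f x z)
      else (1 / real n) * Mcheck n f x y)"

definition doubly_stochastic :: "'a set \<Rightarrow> ('a \<Rightarrow> 'a \<Rightarrow> real) \<Rightarrow> bool" where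
  "doubly_stochastic S A \<longleftrightarrow>
     (\<forall>x\<in>S. \<forall>y\<in>S. A x y \<ge> 0) \<and>
     (\<forall>x\<in>S. (\<Sum>y\<in>S. A x y) = 1) \<and>
     (\<forall>y\<in>S. (\<Sum>x\<in>S. A x y) = 1)"

definition gen_step :: "nat \<Rightarrow> (bool list \<Rightarrow> bool list) \<Rightarrow> bool list \<Rightarrow> bool list pmf" where
  "gen_step n f x = map_pmf (\<lambda>s. Ff f s x) (pmf_of_set {1..n})"

definition gen_iter :: "nat \<Rightarrow> (bool list \<Rightarrow> bool list) \<Rightarrow> nat \<Rightarrow> bool list \<Rightarrow> bool list pmf" where
  "gen_iter n f k x0 = ((\<lambda>p. bind_pmf p (gen_step n f)) ^^ k) (return_pmf x0)"

definition generator :: "nat \<Rightarrow> (bool list \<Rightarrow> bool list) \<Rightarrow> nat \<Rightarrow> bool list \<Rightarrow> bool list pmf" where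
  "generator n f b x0 = bind_pmf (pmf_of_set {1..b+1}) (\<lambda>r. gen_iter n f (b + r) x0)"

end

theory Submission imports Defs begin

text \<open>The generator's output law is the average of the laws \<open>P\<^sup>k(x0, -)\<close> over the window
  \<open>b < k \<le> 2b + 1\<close>. Shifting the window by one step changes this average by at most \<open>1/(b + 1)\<close>,
  so the averaged laws are invariant under \<open>P\<close> up to \<open>O(1/b)\<close>, periodic chains included.
  Hence any limit is stationary, and a uniform limit forces the columns of \<open>P\<close> to sum to 1.
  Conversely, if they do, fix a target \<open>y\<close> and let \<open>h x\<close> be the averaged probability of being
  at \<open>y\<close> when starting from \<open>x\<close>. Since the uniform law is stationary, \<open>h\<close> has mean \<open>1/card S\<close>,
  and \<open>h \<le> P h + 1/(b + 1)\<close>. A maximum principle along the arcs of the strongly connected graph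
  shows that such an \<open>h\<close> oscillates by at most \<open>C/(b + 1)\<close>, so it tends to the constant \<open>1/card S\<close>.\<close>

definition subharmonic_upto :: "'a set \<Rightarrow> ('a \<Rightarrow> 'a \<Rightarrow> real) \<Rightarrow> real \<Rightarrow> ('a \<Rightarrow> real) \<Rightarrow> bool" where
  "subharmonic_upto S P e h \<longleftrightarrow> (\<forall>z\<in>S. h z \<le> (\<Sum>w\<in>S. P z w * h w) + e)"

text \<open>Maximum principle with an error term: if \<open>h\<close> is close to its upper bound \<open>M\<close> at \<open>x\<close>, it is
  so at every point reachable from \<open>x\<close> along arcs of positive probability.\<close>
lemma subharmonic_upto_path_bound:
  fixes P :: "'a \<Rightarrow> 'a \<Rightarrow> real"
  assumes "finite S" and nonneg: "\<And>u v. u \<in> S \<Longrightarrow> v \<in> S \<Longrightarrow> P u v \<ge> 0"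
    and rows: "\<And>u. u \<in> S \<Longrightarrow> (\<Sum>v\<in>S. P u v) = 1"
    and path: "(x, y) \<in> {(u, v). u \<in> S \<and> v \<in> S \<and> P u v > 0}\<^sup>*" and "x \<in> S"
  shows "\<exists>C\<ge>0. \<forall>h M e. (\<forall>z\<in>S. h z \<le> M) \<longrightarrow> e \<ge> 0 \<longrightarrow> subharmonic_upto S P e h \<longrightarrow>
           M - h y \<le> C * (M - h x + e)"
  using path
proof (induction rule: rtrancl_induct)
  case base
  show ?case by (intro exI[of _ 1]) auto
next
  case (step y z)
  then obtain C where "C \<ge> 0" and IH: "\<forall>h M e. (\<forall>z\<in>S. h z \<le> M) \<longrightarrow> e \<ge> 0 \<longrightarrow>
      subharmonic_upto S P e h \<longrightarrow> M - h y \<le> C * (M - h x + e)" by blast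
  have y: "y \<in> S" and z: "z \<in> S" and Pyz: "P y z > 0" using step.hyps(2) by auto
  show ?case
  proof (intro exI[of _ "(C + 1) / P y z"] conjI allI impI)
    show "(C + 1) / P y z \<ge> 0" using \<open>C \<ge> 0\<close> Pyz by simp
    fix h M e assume hM: "\<forall>z\<in>S. h z \<le> M" and "e \<ge> 0" and sub: "subharmonic_upto S P e h"
    have "P y z * (M - h z) \<le> (\<Sum>w\<in>S. P y w * (M - h w))"
      by (rule member_le_sum) (use z y nonneg hM \<open>finite S\<close> in auto)
    also have "\<dots> = M - (\<Sum>w\<in>S. P y w * h w)"
      using rows[OF y] by (simp add: algebra_simps sum_subtractf flip: sum_distrib_left)
    also have "\<dots> \<le> M - h y + e" using sub y unfolding subharmonic_upto_def by force
    also have "\<dots> \<le> (C + 1) * (M - h x + e)"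
      using IH hM \<open>e \<ge> 0\<close> sub \<open>x \<in> S\<close> \<open>C \<ge> 0\<close> by (force simp: algebra_simps)
    finally show "M - h z \<le> (C + 1) / P y z * (M - h x + e)"
      using Pyz by (simp add: field_simps mult.commute)
  qed
qed

lemma subharmonic_upto_oscillation:
  fixes P :: "'a \<Rightarrow> 'a \<Rightarrow> real"
  assumes "finite S" and nonneg: "\<And>u v. u \<in> S \<Longrightarrow> v \<in> S \<Longrightarrow> P u v \<ge> 0"
    and rows: "\<And>u. u \<in> S \<Longrightarrow> (\<Sum>v\<in>S. P u v) = 1"
    and irred: "\<And>x y. x \<in> S \<Longrightarrow> y \<in> S \<Longrightarrow> (x, y) \<in> {(u, v). u \<in> S \<and> v \<in> S \<and> P u v > 0}\<^sup>*"
  shows "\<exists>C\<ge>0. \<forall>h e x y. e \<ge> 0 \<longrightarrow> subharmonic_upto S P e h \<longrightarrow> x \<in> S \<longrightarrow> y \<in> S \<longrightarrow>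
           h x - h y \<le> C * e"
proof -
  let ?bound = "\<lambda>p C. C \<ge> 0 \<and> (\<forall>h M e. (\<forall>z\<in>S. h z \<le> M) \<longrightarrow> e \<ge> 0 \<longrightarrow>
      subharmonic_upto S P e h \<longrightarrow> M - h (snd p) \<le> C * (M - h (fst p) + e))"
  have "\<forall>p\<in>S \<times> S. \<exists>C. ?bound p C"
    using subharmonic_upto_path_bound[OF assms(1) nonneg rows irred] by fastforce
  then obtain Cp where Cp: "\<And>p. p \<in> S \<times> S \<Longrightarrow> ?bound p (Cp p)" by metis
  define C where "C = (\<Sum>p\<in>S \<times> S. Cp p)"
  have Cp_le: "Cp p \<le> C" if "p \<in> S \<times> S" for p
    unfolding C_def by (rule member_le_sum) (use that Cp \<open>finite S\<close> in auto)
  show ?thesis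
  proof (intro exI[of _ C] conjI allI impI)
    show "C \<ge> 0" unfolding C_def using Cp by (intro sum_nonneg) auto
    fix h e x y assume "e \<ge> 0" and sub: "subharmonic_upto S P e h" and "x \<in> S" "y \<in> S"
    obtain m where m: "m \<in> S" "\<forall>z\<in>S. h z \<le> h m"
      using finite_has_maximal[of "h ` S"] \<open>finite S\<close> \<open>x \<in> S\<close> by force
    have "h x - h y \<le> h m - h y" using m \<open>x \<in> S\<close> by simp
    also have "\<dots> \<le> Cp (m, y) * (h m - h m + e)"
      using Cp[of "(m, y)"] m \<open>y \<in> S\<close> \<open>e \<ge> 0\<close> sub unfolding fst_conv snd_conv by blast
    also have "\<dots> \<le> C * e"
      using Cp_le[of "(m, y)"] m \<open>y \<in> S\<close> \<open>e \<ge> 0\<close> by (simp add: mult_right_mono)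
    finally show "h x - h y \<le> C * e" .
  qed
qed

lemma dist_mean_le_oscillation:
  fixes h :: "'a \<Rightarrow> real"
  assumes "finite S" and osc: "\<And>x y. x \<in> S \<Longrightarrow> y \<in> S \<Longrightarrow> h x - h y \<le> d" and "x \<in> S"
  shows "\<bar>h x - (\<Sum>y\<in>S. h y) / card S\<bar> \<le> d"
proof -
  have card: "real (card S) > 0" using assms(1,3) card_gt_0_iff by fastforce
  have "(\<Sum>y\<in>S. h x - h y) = card S * h x - (\<Sum>y\<in>S. h y)" by (simp add: sum_subtractf)
  moreover have "(\<Sum>y\<in>S. h x - h y) \<le> card S * d"
    using sum_bounded_above[of S "\<lambda>y. h x - h y" d] osc \<open>x \<in> S\<close> by simp
  moreover have "- d \<le> h x - h y" if "y \<in> S" for y using osc[OF that \<open>x \<in> S\<close>] by simp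
  then have "(\<Sum>y\<in>S. h x - h y) \<ge> - (card S * d)"
    using sum_bounded_below[of S "- d" "\<lambda>y. h x - h y"] by simp
  ultimately show ?thesis using card by (simp add: abs_le_iff field_simps)
qed

definition kernel_pow :: "('a \<Rightarrow> 'a pmf) \<Rightarrow> nat \<Rightarrow> 'a \<Rightarrow> 'a pmf" where
  "kernel_pow K k x = ((\<lambda>p. bind_pmf p K) ^^ k) (return_pmf x)"

definition kernel_pow_avg :: "('a \<Rightarrow> 'a pmf) \<Rightarrow> nat \<Rightarrow> 'a \<Rightarrow> 'a pmf" where
  "kernel_pow_avg K b x = bind_pmf (pmf_of_set {1..b+1}) (\<lambda>r. kernel_pow K (b + r) x)"

definition kernel_irreducible_on :: "'a set \<Rightarrow> ('a \<Rightarrow> 'a pmf) \<Rightarrow> bool" where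
  "kernel_irreducible_on S K \<longleftrightarrow>
     (\<forall>x\<in>S. \<forall>y\<in>S. (x, y) \<in> {(u, v). u \<in> S \<and> v \<in> set_pmf (K u)}\<^sup>*)"

lemma kernel_pow_0 [simp]: "kernel_pow K 0 x = return_pmf x"
  by (simp add: kernel_pow_def)

lemma kernel_pow_Suc: "kernel_pow K (Suc k) x = bind_pmf (kernel_pow K k x) K"
  by (simp add: kernel_pow_def)

lemma kernel_pow_Suc': "kernel_pow K (Suc k) x = bind_pmf (K x) (kernel_pow K k)"
proof (induction k arbitrary: x)
  case 0
  show ?case by (simp add: kernel_pow_Suc bind_return_pmf bind_return_pmf')
next
  case (Suc k)
  show ?case
    by (simp only: kernel_pow_Suc[of K "Suc k"] Suc bind_assoc_pmf flip: kernel_pow_Suc)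
qed

lemma pmf_bind_finite_support:
  assumes "finite A" "set_pmf M \<subseteq> A"
  shows "pmf (bind_pmf M g) y = (\<Sum>a\<in>A. pmf M a * pmf (g a) y)"
  using assms by (subst pmf_bind, subst integral_measure_pmf[of A]) auto

lemma pmf_bind_uniform_window:
  "pmf (bind_pmf (pmf_of_set {1..b+1}) F) y = (\<Sum>r=1..b+1. pmf (F r) y) / (real b + 1)"
  by (subst pmf_bind_pmf_of_set) auto

lemma pmf_kernel_pow_avg:
  "pmf (kernel_pow_avg K b x) y = (\<Sum>r=1..b+1. pmf (kernel_pow K (b + r) x) y) / (real b + 1)"
  unfolding kernel_pow_avg_def by (rule pmf_bind_uniform_window)

lemma bind_kernel_pow_avg:
  "bind_pmf (kernel_pow_avg K b x) K = bind_pmf (pmf_of_set {1..b+1}) (\<lambda>r. kernel_pow K (Suc (b + r)) x)"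
  unfolding kernel_pow_avg_def by (simp add: bind_assoc_pmf kernel_pow_Suc)

lemma kernel_bind_kernel_pow_avg:
  "bind_pmf (K x) (kernel_pow_avg K b) = bind_pmf (kernel_pow_avg K b x) K"
proof -
  have "bind_pmf (K x) (kernel_pow_avg K b) =
        bind_pmf (pmf_of_set {1..b+1}) (\<lambda>r. bind_pmf (K x) (kernel_pow K (b + r)))"
    unfolding kernel_pow_avg_def by (rule bind_commute_pmf)
  then show ?thesis by (simp add: bind_kernel_pow_avg kernel_pow_Suc')
qed

lemma kernel_pow_avg_shift_bound:
  "\<bar>pmf (bind_pmf (kernel_pow_avg K b x) K) y - pmf (kernel_pow_avg K b x) y\<bar> \<le> 1 / (real b + 1)"
proof -
  define g where "g k = pmf (kernel_pow K k x) y" for k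
  have "(\<Sum>r=1..b+1. g (b + Suc r) - g (b + r)) = g (b + Suc (b + 1)) - g (b + 1)"
    by (rule sum_Suc_diff) simp
  then have "(\<Sum>r=1..b+1. g (Suc (b + r))) - (\<Sum>r=1..b+1. g (b + r)) =
             g (b + Suc (b + 1)) - g (b + 1)"
    by (simp only: sum_subtractf add_Suc_right)
  moreover have g_nonneg: "0 \<le> g k" and g_le_1: "g k \<le> 1" for k by (simp_all add: g_def pmf_le_1)
  then have "\<bar>g (b + Suc (b + 1)) - g (b + 1)\<bar> \<le> 1"
    using g_nonneg[of "b + 1"] g_le_1[of "b + 1"]
      g_nonneg[of "b + Suc (b + 1)"] g_le_1[of "b + Suc (b + 1)"] by linarith
  ultimately have "\<bar>(\<Sum>r=1..b+1. g (Suc (b + r))) - (\<Sum>r=1..b+1. g (b + r))\<bar> \<le> 1"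
    by simp
  moreover have "pmf (bind_pmf (kernel_pow_avg K b x) K) y - pmf (kernel_pow_avg K b x) y =
      ((\<Sum>r=1..b+1. g (Suc (b + r))) - (\<Sum>r=1..b+1. g (b + r))) / (real b + 1)"
    by (simp only: bind_kernel_pow_avg pmf_kernel_pow_avg pmf_bind_uniform_window g_def
        diff_divide_distrib)
  ultimately show ?thesis by (simp add: divide_right_mono)
qed

lemma LIMSEQ_bounded_by_inverse:
  fixes u :: "nat \<Rightarrow> real"
  assumes "\<And>b. \<bar>u b\<bar> \<le> C / (real b + 1)"
  shows "u \<longlonglongrightarrow> 0"
proof (rule Lim_null_comparison)
  show "\<forall>\<^sub>F b in sequentially. norm (u b) \<le> C / (real b + 1)" using assms by simp
  have "(\<lambda>b. C * inverse (real (Suc b))) \<longlonglongrightarrow> C * 0"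
    by (intro tendsto_mult tendsto_const LIMSEQ_inverse_real_of_nat)
  then show "(\<lambda>b. C / (real b + 1)) \<longlonglongrightarrow> 0" by (simp add: divide_inverse add.commute)
qed

lemma doubly_stochastic_cong:
  "(\<And>x y. x \<in> S \<Longrightarrow> y \<in> S \<Longrightarrow> A x y = B x y) \<Longrightarrow> doubly_stochastic S A = doubly_stochastic S B"
  unfolding doubly_stochastic_def by (simp cong: sum.cong)

locale finite_markov_kernel =
  fixes S :: "'a set" and K :: "'a \<Rightarrow> 'a pmf"
  assumes finite_S: "finite S" and S_nonempty: "S \<noteq> {}"
    and set_pmf_K: "\<And>x. x \<in> S \<Longrightarrow> set_pmf (K x) \<subseteq> S"
begin

lemma set_pmf_kernel_pow: "x \<in> S \<Longrightarrow> set_pmf (kernel_pow K k x) \<subseteq> S"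
  by (induction k arbitrary: x) (auto simp: kernel_pow_Suc' dest!: set_pmf_K)

lemma set_pmf_kernel_pow_avg: "x \<in> S \<Longrightarrow> set_pmf (kernel_pow_avg K b x) \<subseteq> S"
  unfolding kernel_pow_avg_def using set_pmf_kernel_pow by auto

lemma doubly_stochastic_iff_column_sums:
  "doubly_stochastic S (\<lambda>x y. pmf (K x) y) \<longleftrightarrow> (\<forall>y\<in>S. (\<Sum>x\<in>S. pmf (K x) y) = 1)"
  unfolding doubly_stochastic_def using sum_pmf_eq_1[OF finite_S set_pmf_K] by simp

lemma bind_uniform_eq_uniform:
  assumes "\<forall>y\<in>S. (\<Sum>x\<in>S. pmf (K x) y) = 1"
  shows "bind_pmf (pmf_of_set S) K = pmf_of_set S"
proof (rule pmf_eqI)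
  fix y
  have "(\<Sum>x\<in>S. pmf (K x) y) = indicator S y"
  proof (cases "y \<in> S")
    case False
    then have "pmf (K x) y = 0" if "x \<in> S" for x
      using set_pmf_K[OF that] by (auto simp: pmf_eq_0_set_pmf)
    then show ?thesis using False by simp
  qed (use assms in simp)
  then show "pmf (bind_pmf (pmf_of_set S) K) y = pmf (pmf_of_set S) y"
    using finite_S S_nonempty by (simp add: pmf_bind_pmf_of_set)
qed

lemma bind_uniform_kernel_pow_avg:
  assumes "\<forall>y\<in>S. (\<Sum>x\<in>S. pmf (K x) y) = 1"
  shows "bind_pmf (pmf_of_set S) (kernel_pow_avg K b) = pmf_of_set S"
proof -
  have pow: "bind_pmf (pmf_of_set S) (kernel_pow K k) = pmf_of_set S" for k
  proof (induction k)
    case (Suc k)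
    have "bind_pmf (pmf_of_set S) (kernel_pow K (Suc k)) =
          bind_pmf (bind_pmf (pmf_of_set S) (kernel_pow K k)) K"
      by (simp add: kernel_pow_Suc[abs_def] bind_assoc_pmf)
    then show ?case using Suc bind_uniform_eq_uniform[OF assms] by simp
  qed (simp add: bind_return_pmf')
  show ?thesis
    unfolding kernel_pow_avg_def by (subst bind_commute_pmf) (simp add: pow)
qed

lemma kernel_pow_avg_limit_stationary:
  assumes "x0 \<in> S" and lim: "\<And>x. x \<in> S \<Longrightarrow> (\<lambda>b. pmf (kernel_pow_avg K b x0) x) \<longlonglongrightarrow> \<mu> x"
    and "y \<in> S"
  shows "(\<Sum>x\<in>S. \<mu> x * pmf (K x) y) = \<mu> y"
proof -
  let ?L = "\<lambda>b. kernel_pow_avg K b x0"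
  have sum_eq: "(\<Sum>x\<in>S. pmf (?L b) x * pmf (K x) y) = pmf (bind_pmf (?L b) K) y" for b
    by (rule pmf_bind_finite_support[OF finite_S set_pmf_kernel_pow_avg[OF \<open>x0 \<in> S\<close>], symmetric])
  have "(\<lambda>b. pmf (bind_pmf (?L b) K) y - pmf (?L b) y) \<longlonglongrightarrow> 0"
    by (rule LIMSEQ_bounded_by_inverse[of _ 1]) (rule kernel_pow_avg_shift_bound)
  then have "(\<lambda>b. pmf (bind_pmf (?L b) K) y - pmf (?L b) y + pmf (?L b) y) \<longlonglongrightarrow> 0 + \<mu> y"
    by (intro tendsto_add lim \<open>y \<in> S\<close>)
  then have "(\<lambda>b. pmf (bind_pmf (?L b) K) y) \<longlonglongrightarrow> \<mu> y" by simp
  moreover have "(\<lambda>b. pmf (bind_pmf (?L b) K) y) \<longlonglongrightarrow> (\<Sum>x\<in>S. \<mu> x * pmf (K x) y)"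
    unfolding sum_eq[symmetric] by (intro tendsto_sum tendsto_mult tendsto_const lim)
  ultimately show ?thesis using LIMSEQ_unique by blast
qed

lemma kernel_pow_avg_tendsto_uniform:
  assumes irreducible: "kernel_irreducible_on S K"
    and columns: "\<forall>y\<in>S. (\<Sum>x\<in>S. pmf (K x) y) = 1" and "x0 \<in> S"
  shows "(\<lambda>b. pmf (kernel_pow_avg K b x0) y) \<longlonglongrightarrow> pmf (pmf_of_set S) y"
proof (cases "y \<in> S")
  case False
  then have "pmf (kernel_pow_avg K b x0) y = 0" for b
    using set_pmf_kernel_pow_avg[OF \<open>x0 \<in> S\<close>] by (auto simp: pmf_eq_0_set_pmf)
  then show ?thesis using False finite_S S_nonempty by simp
next
  case True
  define P where "P u v = pmf (K u) v" for u v
  define H where "H b x = pmf (kernel_pow_avg K b x) y" for b x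
  have "{(u, v). u \<in> S \<and> v \<in> set_pmf (K u)} \<subseteq> {(u, v). u \<in> S \<and> v \<in> S \<and> P u v > 0}"
    using set_pmf_K by (auto simp: P_def pmf_positive)
  then have paths: "(x, z) \<in> {(u, v). u \<in> S \<and> v \<in> S \<and> P u v > 0}\<^sup>*" if "x \<in> S" "z \<in> S" for x z
    using irreducible that rtrancl_mono unfolding kernel_irreducible_on_def by blast
  have nonneg: "P u v \<ge> 0" if "u \<in> S" "v \<in> S" for u v
    by (simp add: P_def)
  have rows: "(\<Sum>v\<in>S. P u v) = 1" if "u \<in> S" for u
    unfolding P_def using sum_pmf_eq_1[OF finite_S set_pmf_K[OF that]] .
  obtain C where osc: "\<forall>h e x z. e \<ge> 0 \<longrightarrow> subharmonic_upto S P e h \<longrightarrow> x \<in> S \<longrightarrow> z \<in> S \<longrightarrow>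
      h x - h z \<le> C * e"
    using subharmonic_upto_oscillation[OF finite_S nonneg rows paths] by blast
  have sub: "subharmonic_upto S P (1 / (real b + 1)) (H b)" for b
    unfolding subharmonic_upto_def
  proof
    fix z assume "z \<in> S"
    have "(\<Sum>w\<in>S. P z w * H b w) = pmf (bind_pmf (kernel_pow_avg K b z) K) y"
      using pmf_bind_finite_support[OF finite_S set_pmf_K[OF \<open>z \<in> S\<close>], of "kernel_pow_avg K b" y]
      by (simp add: P_def H_def kernel_bind_kernel_pow_avg)
    then show "H b z \<le> (\<Sum>w\<in>S. P z w * H b w) + 1 / (real b + 1)"
      using kernel_pow_avg_shift_bound[of K b z y] by (simp add: H_def abs_le_iff)
  qed
  have mean: "(\<Sum>x\<in>S. H b x) / card S = pmf (pmf_of_set S) y" for b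
    using pmf_bind_pmf_of_set[OF S_nonempty finite_S, of "kernel_pow_avg K b" y]
    by (simp add: H_def bind_uniform_kernel_pow_avg[OF columns])
  have "\<bar>H b x0 - pmf (pmf_of_set S) y\<bar> \<le> C / (real b + 1)" for b
  proof -
    have "H b x - H b z \<le> C * (1 / (real b + 1))" if "x \<in> S" "z \<in> S" for x z
      by (rule osc[rule_format, OF _ sub that]) simp
    then have "\<bar>H b x0 - (\<Sum>x\<in>S. H b x) / card S\<bar> \<le> C * (1 / (real b + 1))"
      by (rule dist_mean_le_oscillation[OF finite_S _ \<open>x0 \<in> S\<close>])
    then show ?thesis by (simp add: mean)
  qed
  then have "(\<lambda>b. H b x0 - pmf (pmf_of_set S) y) \<longlonglongrightarrow> 0"
    by (rule LIMSEQ_bounded_by_inverse)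
  then show ?thesis unfolding H_def LIM_zero_iff .
qed

lemma kernel_pow_avg_tendsto_uniform_iff:
  assumes "kernel_irreducible_on S K"
  shows "(\<forall>x0\<in>S. \<forall>y. (\<lambda>b. pmf (kernel_pow_avg K b x0) y) \<longlonglongrightarrow> pmf (pmf_of_set S) y)
         \<longleftrightarrow> (\<forall>y\<in>S. (\<Sum>x\<in>S. pmf (K x) y) = 1)"
proof
  assume conv: "\<forall>x0\<in>S. \<forall>y. (\<lambda>b. pmf (kernel_pow_avg K b x0) y) \<longlonglongrightarrow> pmf (pmf_of_set S) y"
  obtain x0 where "x0 \<in> S" using S_nonempty by blast
  have card: "real (card S) > 0" using finite_S S_nonempty by (simp add: card_gt_0_iff)
  show "\<forall>y\<in>S. (\<Sum>x\<in>S. pmf (K x) y) = 1"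
  proof
    fix y assume "y \<in> S"
    have "(\<Sum>x\<in>S. pmf (pmf_of_set S) x * pmf (K x) y) = pmf (pmf_of_set S) y"
      using kernel_pow_avg_limit_stationary[OF \<open>x0 \<in> S\<close> _ \<open>y \<in> S\<close>] conv \<open>x0 \<in> S\<close> by blast
    then have "(\<Sum>x\<in>S. pmf (K x) y) / card S = 1 / card S"
      using finite_S S_nonempty \<open>y \<in> S\<close> by (simp add: sum_divide_distrib)
    then show "(\<Sum>x\<in>S. pmf (K x) y) = 1" using card by simp
  qed
qed (use kernel_pow_avg_tendsto_uniform assms in blast)

end

lemma length_Ff [simp]: "length (Ff f i x) = length x"
  by (simp add: Ff_def)

lemma Ff_coordinate_unique:
  assumes "Ff f s x = y" "Ff f i x = y" "y \<noteq> x" "s \<in> {1..length x}" "i \<in> {1..length x}"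
  shows "s = i"
proof (rule ccontr)
  assume "s \<noteq> i"
  then have "y ! (s - 1) = x ! (s - 1)" using assms(2,4,5) by (auto simp: Ff_def)
  then have "f x ! (s - 1) = x ! (s - 1)" using assms(1,4) by (auto simp: Ff_def)
  then have "y = x" using assms(1) by (simp add: Ff_def)
  with \<open>y \<noteq> x\<close> show False ..
qed

lemma set_pmf_gen_step: "n \<ge> 1 \<Longrightarrow> set_pmf (gen_step n f x) = (\<lambda>s. Ff f s x) ` {1..n}"
  by (simp add: gen_step_def)

lemma pmf_gen_step_off_diagonal:
  assumes "n \<ge> 1" "x \<in> configs n" "y \<noteq> x"
  shows "pmf (gen_step n f x) y = Mcheck n f x y / real n"
proof -
  have "pmf (gen_step n f x) y = card ({1..n} \<inter> (\<lambda>s. Ff f s x) -` {y}) / real n"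
    using assms(1) by (simp add: gen_step_def pmf_map measure_pmf_of_set)
  also have "card ({1..n} \<inter> (\<lambda>s. Ff f s x) -` {y}) = (if arc n f x y then 1 else 0)"
  proof (cases "arc n f x y")
    case True
    then obtain i where i: "i \<in> {1..n}" "y = Ff f i x" unfolding arc_def by auto
    have "s = i" if "s \<in> {1..n}" "Ff f s x = y" for s
      using Ff_coordinate_unique[OF that(2) i(2)[symmetric] assms(3)] that(1) i(1) assms(2)
      by (simp add: configs_def)
    then have "{1..n} \<inter> (\<lambda>s. Ff f s x) -` {y} = {i}" using i by blast
    then show ?thesis using True by simp
  next
    case False
    then have "{1..n} \<inter> (\<lambda>s. Ff f s x) -` {y} = {}" using assms(2) unfolding arc_def by auto
    then show ?thesis using False by simp
  qed
  finally show ?thesis by (simp add: Mcheck_def)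
qed

lemma finite_markov_kernel_gen_step:
  assumes "n \<ge> 1"
  shows "finite_markov_kernel (configs n) (gen_step n f)"
proof
  show "finite (configs n)"
    unfolding configs_def using finite_lists_length_eq[of "UNIV :: bool set" n] by simp
  have "replicate n False \<in> configs n" by (simp add: configs_def)
  then show "configs n \<noteq> {}" by blast
  show "set_pmf (gen_step n f x) \<subseteq> configs n" if "x \<in> configs n" for x
    using that assms by (auto simp: set_pmf_gen_step configs_def)
qed

lemma Mmat_eq_pmf_gen_step:
  assumes "n \<ge> 1" "x \<in> configs n" "y \<in> configs n"
  shows "Mmat n f x y = pmf (gen_step n f x) y"
proof (cases "x = y")
  case True
  interpret finite_markov_kernel "configs n" "gen_step n f"
    using assms(1) by (rule finite_markov_kernel_gen_step)
  have "1 = pmf (gen_step n f x) x + (\<Sum>z\<in>configs n - {x}. pmf (gen_step n f x) z)"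
    using sum.remove[OF finite_S assms(2), of "pmf (gen_step n f x)"]
      sum_pmf_eq_1[OF finite_S set_pmf_K[OF assms(2)]]
    by simp
  also have "(\<Sum>z\<in>configs n - {x}. pmf (gen_step n f x) z) =
             (\<Sum>z\<in>configs n - {x}. Mcheck n f x z / real n)"
    using pmf_gen_step_off_diagonal[OF assms(1,2)] by (intro sum.cong) auto
  finally show ?thesis using True by (simp add: Mmat_def sum_divide_distrib)
next
  case False
  then show ?thesis using pmf_gen_step_off_diagonal[OF assms(1,2)] by (simp add: Mmat_def)
qed

lemma kernel_irreducible_on_gen_step:
  assumes "n \<ge> 1" "strongly_connected_Gamma n f"
  shows "kernel_irreducible_on (configs n) (gen_step n f)"
proof -
  have "{(u, v). arc n f u v} \<subseteq> {(u, v). u \<in> configs n \<and> v \<in> set_pmf (gen_step n f u)}"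
    using assms(1) by (auto simp: arc_def set_pmf_gen_step)
  then show ?thesis
    using assms(2) rtrancl_mono unfolding kernel_irreducible_on_def strongly_connected_Gamma_def by blast
qed

lemma generator_eq_kernel_pow_avg: "generator n f = kernel_pow_avg (gen_step n f)"
  by (simp add: fun_eq_iff generator_def gen_iter_def kernel_pow_avg_def kernel_pow_def)

theorem theorem4:
  fixes n :: nat and f :: "bool list \<Rightarrow> bool list"
  assumes "n \<ge> 1"
    and "\<And>x. x \<in> configs n \<Longrightarrow> f x \<in> configs n"
    and "strongly_connected_Gamma n f"
  shows "(\<forall>x0\<in>configs n. \<forall>y.
            (\<lambda>b. pmf (generator n f b x0) y) \<longlonglongrightarrow> pmf (pmf_of_set (configs n)) y)
         \<longleftrightarrow> doubly_stochastic (configs n) (Mmat n f)"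
proof -
  interpret finite_markov_kernel "configs n" "gen_step n f"
    using assms(1) by (rule finite_markov_kernel_gen_step)
  have "doubly_stochastic (configs n) (Mmat n f) \<longleftrightarrow>
        doubly_stochastic (configs n) (\<lambda>x y. pmf (gen_step n f x) y)"
    using Mmat_eq_pmf_gen_step[OF assms(1)] by (rule doubly_stochastic_cong)
  then show ?thesis
    unfolding generator_eq_kernel_pow_avg doubly_stochastic_iff_column_sums
    using kernel_pow_avg_tendsto_uniform_iff[OF kernel_irreducible_on_gen_step[OF assms(1,3)]]
    by (simp only:)
qed

end
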